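(* Let $r\ge1$ and let $\gamma_1,\dots,\gamma_{r+1},p_1,\dots,p_{r+1},a_1,\dots,a_{r+1}$ be indeterminates. Let $\mathrm{Wr}$ denote the relations (coefficientwise in $z=e^{\zeta}$) $$\frac{\det_{1\le i,j\le r+1}\big[z(1+\gamma_i)^{j-1}-p_i\gamma_i^{j-1}\big]}{\det_{1\le i,j\le r+1}\big[(1+\gamma_i)^{j-1}\big]}=\Lambda(z)=\prod_{i=1}^{r+1}(z-a_i),$$ and set ${\rm Fun}(t{\rm Op}_Z^{\Lambda})=\mathbb{C}(\gamma_i,p_i,a_i)/\mathrm{Wr}$. Let $t=(t_{ij})_{i,j=1}^{r+1}$ be the rational Ruijsenaars–Schneider Lax matrix $$t_{ij}=\frac{\prod_{m\neq j}(\gamma_i-\gamma_m-1)}{\prod_{l\neq j}(\gamma_j-\gamma_l)}\,p_i,$$ and define the rRS Hamiltonians by $\det(z-t)=\sum_k H^{rRS}_k(\{\gamma_i\},\{p_i\})z^k$. Then there is an isomorphism of algebras $${\rm Fun}(t{\rm Op}_Z^{\Lambda})\cong\mathbb{C}(\gamma_i,p_i,a_i)\Big/\Big(\text{relations }\det(z-t)=\prod_{i=1}^{r+1}(z-a_i)\text{ coefficientwise in }z\Big).$$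
   Context: ${\rm Fun}(t{\rm Op}_Z^{\Lambda})$ is the algebra of functions on the space of canonical trigonometrically $Z$-twisted Miura $SL(r+1)$-opers on $\mathbb{P}^1$, $Z=\mathrm{diag}(\gamma_1,\dots,\gamma_{r+1})$ regular semisimple: the oper connection is gauge equivalent to $\partial_z+Z/z$ (equivalently, in the cylinder coordinate $z=e^{\zeta}$, to $\partial_\zeta+Z$), the section of the line subbundle has degree-one monic components, the only regular singularities are the distinct roots $a_i$ of $\Lambda$, and the twisted Wronskian condition takes the form $\mathrm{Wr}$ above. *)

theory Defs
  imports "Jordan_Normal_Form.Determinant"
begin

text \<open>Indices i,j run over 0..<n with n = r+1 (shifted by one w.r.t. the paper),
  so the exponent j-1 of the paper becomes j.\<close>

definition wr_matrix :: "nat \<Rightarrow> (nat \<Rightarrow> complex) \<Rightarrow> (nat \<Rightarrow> complex) \<Rightarrow> complex \<Rightarrow> complex mat" where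
  "wr_matrix n \<gamma> p z = mat n n (\<lambda>(i,j). z * (1 + \<gamma> i) ^ j - p i * \<gamma> i ^ j)"

definition vdm_matrix :: "nat \<Rightarrow> (nat \<Rightarrow> complex) \<Rightarrow> complex mat" where
  "vdm_matrix n \<gamma> = mat n n (\<lambda>(i,j). (1 + \<gamma> i) ^ j)"

definition wr_ratio :: "nat \<Rightarrow> (nat \<Rightarrow> complex) \<Rightarrow> (nat \<Rightarrow> complex) \<Rightarrow> complex \<Rightarrow> complex" where
  "wr_ratio n \<gamma> p z = det (wr_matrix n \<gamma> p z) / det (vdm_matrix n \<gamma>)"

definition rRS_lax :: "nat \<Rightarrow> (nat \<Rightarrow> complex) \<Rightarrow> (nat \<Rightarrow> complex) \<Rightarrow> complex mat" where
  "rRS_lax n \<gamma> p = mat n n (\<lambda>(i,j).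
     (\<Prod>m\<in>{0..<n}-{j}. \<gamma> i - \<gamma> m - 1) / (\<Prod>l\<in>{0..<n}-{j}. \<gamma> j - \<gamma> l) * p i)"

definition rRS_charpoly :: "nat \<Rightarrow> (nat \<Rightarrow> complex) \<Rightarrow> (nat \<Rightarrow> complex) \<Rightarrow> complex \<Rightarrow> complex" where
  "rRS_charpoly n \<gamma> p z = det (z \<cdot>\<^sub>m 1\<^sub>m n - rRS_lax n \<gamma> p)"

end

theory Submission
  imports Defs "HOL-Computational_Algebra.Polynomial"
begin

text \<open>With nodes \<open>x\<^sub>j = 1 + \<gamma>\<^sub>j\<close>, the Lax entry \<open>t\<^sub>i\<^sub>j\<close> is \<open>p\<^sub>i L\<^sub>j(\<gamma>\<^sub>i)\<close>, where \<open>L\<^sub>j\<close> is the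
  Lagrange basis polynomial at these nodes. Lagrange interpolation of \<open>y\<^sup>k\<close> gives
  \<open>\<Sum>\<^sub>j L\<^sub>j(\<gamma>\<^sub>i) x\<^sub>j\<^sup>k = \<gamma>\<^sub>i\<^sup>k\<close>, i.e. \<open>t V = (p\<^sub>i \<gamma>\<^sub>i\<^sup>k)\<close> for the Vandermonde matrix
  \<open>V = (x\<^sub>i\<^sup>k)\<close>. Hence the Wronskian matrix factors as \<open>(z - t) V\<close>, and dividing its
  determinant by \<open>det V \<noteq> 0\<close> leaves \<open>det (z - t)\<close>.\<close>

lemma poly_eq_sum_coeffs_lessThan:
  fixes p :: "'a::comm_semiring_1 poly"
  assumes "degree p < n"
  shows "poly p y = (\<Sum>k<n. coeff p k * y ^ k)"
proof -
  have "poly p y = (\<Sum>k\<le>degree p. coeff p k * y ^ k)" by (rule poly_altdef)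
  also have "\<dots> = (\<Sum>k<n. coeff p k * y ^ k)"
    using assms by (intro sum.mono_neutral_left) (auto simp: coeff_eq_0)
  finally show ?thesis .
qed

definition lagrange_basis :: "nat \<Rightarrow> (nat \<Rightarrow> 'a::field) \<Rightarrow> nat \<Rightarrow> 'a poly" where
  "lagrange_basis n x j =
     smult (inverse (\<Prod>l\<in>{0..<n}-{j}. x j - x l)) (\<Prod>m\<in>{0..<n}-{j}. [:- x m, 1:])"

lemma poly_lagrange_basis:
  "poly (lagrange_basis n x j) y = (\<Prod>m\<in>{0..<n}-{j}. y - x m) / (\<Prod>l\<in>{0..<n}-{j}. x j - x l)"
  by (simp add: lagrange_basis_def poly_prod field_simps)

lemma degree_lagrange_basis:
  assumes "j < n"
  shows "degree (lagrange_basis n x j) < n"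
proof -
  have "degree (\<Prod>m\<in>{0..<n}-{j}. [:- x m, 1:]) \<le> (\<Sum>m\<in>{0..<n}-{j}. degree [:- x m, 1:])"
    using degree_prod_sum_le[of "{0..<n}-{j}" "\<lambda>m. [:- x m, 1:]"] by (simp add: o_def)
  also have "\<dots> < n" using assms by simp
  finally show ?thesis
    unfolding lagrange_basis_def using degree_smult_le le_less_trans by blast
qed

lemma poly_lagrange_basis_node:
  assumes "inj_on x {0..<n}" "i < n" "j < n"
  shows "poly (lagrange_basis n x j) (x i) = (if i = j then 1 else 0)"
  using assms by (auto simp: poly_lagrange_basis prod_zero_iff inj_on_def)

lemma lagrange_interpolation:
  fixes f :: "'a::field poly"
  assumes inj: "inj_on x {0..<n}" and deg: "degree f < n"
  shows "(\<Sum>j<n. smult (poly f (x j)) (lagrange_basis n x j)) = f"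
proof (rule poly_eqI_degree[where A = "x ` {0..<n}"])
  fix y assume "y \<in> x ` {0..<n}"
  then obtain i where i: "i < n" "y = x i" by auto
  have "poly (\<Sum>j<n. smult (poly f (x j)) (lagrange_basis n x j)) (x i)
      = (\<Sum>j<n. poly f (x j) * (if i = j then 1 else 0))"
    using inj i by (simp add: poly_sum poly_lagrange_basis_node)
  also have "\<dots> = poly f (x i)"
    using i by (simp add: if_distrib[of "(*) _"] cong: if_cong)
  finally show "poly (\<Sum>j<n. smult (poly f (x j)) (lagrange_basis n x j)) y = poly f y"
    using i by simp
next
  have card: "card (x ` {0..<n}) = n" using inj by (simp add: card_image)
  show "degree (\<Sum>j<n. smult (poly f (x j)) (lagrange_basis n x j)) < card (x ` {0..<n})"
    unfolding card using deg
    by (intro degree_sum_less) (auto intro: le_less_trans[OF degree_smult_le] degree_lagrange_basis)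
  show "degree f < card (x ` {0..<n})" using card deg by simp
qed

text \<open>The coefficients of the Lagrange basis form the inverse of the Vandermonde matrix.\<close>
lemma det_vandermonde_nonzero:
  fixes x :: "nat \<Rightarrow> 'a::field"
  assumes inj: "inj_on x {0..<n}"
  shows "det (mat n n (\<lambda>(i,k). x i ^ k)) \<noteq> 0"
proof -
  define V where "V = mat n n (\<lambda>(i,k). x i ^ k)"
  define C where "C = mat n n (\<lambda>(k,j). coeff (lagrange_basis n x j) k)"
  have "V * C = 1\<^sub>m n"
  proof (rule eq_matI)
    fix i j assume "i < dim_row (1\<^sub>m n :: 'a mat)" "j < dim_col (1\<^sub>m n :: 'a mat)"
    hence ij: "i < n" "j < n" by auto
    have "(V * C) $$ (i,j) = (\<Sum>k<n. coeff (lagrange_basis n x j) k * x i ^ k)"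
      using ij by (simp add: V_def C_def scalar_prod_def atLeast0LessThan mult.commute)
    also have "\<dots> = poly (lagrange_basis n x j) (x i)"
      by (rule poly_eq_sum_coeffs_lessThan[symmetric, OF degree_lagrange_basis[OF ij(2)]])
    also have "\<dots> = 1\<^sub>m n $$ (i,j)"
      using ij by (simp add: poly_lagrange_basis_node[OF inj])
    finally show "(V * C) $$ (i,j) = 1\<^sub>m n $$ (i,j)" .
  qed (simp_all add: V_def C_def)
  hence "det V * det C = 1"
    using det_mult[of V n C] by (simp add: V_def C_def)
  thus ?thesis unfolding V_def by auto
qed

lemma rRS_lax_lagrange:
  "rRS_lax n \<gamma> p = mat n n (\<lambda>(i,j). p i * poly (lagrange_basis n (\<lambda>l. 1 + \<gamma> l) j) (\<gamma> i))"
proof -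
  have "(\<Prod>m\<in>{0..<n}-{j}. \<gamma> i - \<gamma> m - 1) = (\<Prod>m\<in>{0..<n}-{j}. \<gamma> i - (1 + \<gamma> m))"
    "(\<Prod>l\<in>{0..<n}-{j}. \<gamma> j - \<gamma> l) = (\<Prod>l\<in>{0..<n}-{j}. (1 + \<gamma> j) - (1 + \<gamma> l))"
    for i j :: nat
    by (simp_all add: algebra_simps)
  then show ?thesis
    by (intro eq_matI) (simp_all add: rRS_lax_def poly_lagrange_basis)
qed

lemma rRS_lax_mult_vdm_matrix:
  assumes "inj_on \<gamma> {0..<n}"
  shows "rRS_lax n \<gamma> p * vdm_matrix n \<gamma> = mat n n (\<lambda>(i,k). p i * \<gamma> i ^ k)"
proof (rule eq_matI)
  fix i k assume "i < dim_row (mat n n (\<lambda>(i,k). p i * \<gamma> i ^ k))"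
    "k < dim_col (mat n n (\<lambda>(i,k). p i * \<gamma> i ^ k))"
  hence ik: "i < n" "k < n" by auto
  define x where "x = (\<lambda>l. 1 + \<gamma> l)"
  have inj: "inj_on x {0..<n}" using assms by (auto simp: inj_on_def x_def)
  have interpolation: "(\<Sum>j<n. smult (x j ^ k) (lagrange_basis n x j)) = monom 1 k"
    using lagrange_interpolation[OF inj, of "monom 1 k"] ik by (simp add: degree_monom_eq poly_monom)
  have "(rRS_lax n \<gamma> p * vdm_matrix n \<gamma>) $$ (i,k)
      = p i * poly (\<Sum>j<n. smult (x j ^ k) (lagrange_basis n x j)) (\<gamma> i)"
    using ik by (simp add: rRS_lax_lagrange vdm_matrix_def scalar_prod_def poly_sum poly_monom
        sum_distrib_left atLeast0LessThan x_def mult_ac)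
  also have "\<dots> = p i * \<gamma> i ^ k"
    by (simp add: interpolation poly_monom)
  finally show "(rRS_lax n \<gamma> p * vdm_matrix n \<gamma>) $$ (i,k) = mat n n (\<lambda>(i,k). p i * \<gamma> i ^ k) $$ (i,k)"
    using ik by simp
qed (simp_all add: rRS_lax_def vdm_matrix_def)

lemma wr_matrix_factorization:
  assumes "inj_on \<gamma> {0..<n}"
  shows "wr_matrix n \<gamma> p z = (z \<cdot>\<^sub>m 1\<^sub>m n - rRS_lax n \<gamma> p) * vdm_matrix n \<gamma>"
proof -
  have V: "vdm_matrix n \<gamma> \<in> carrier_mat n n" by (simp add: vdm_matrix_def)
  have T: "rRS_lax n \<gamma> p \<in> carrier_mat n n" by (simp add: rRS_lax_def)
  have "(z \<cdot>\<^sub>m 1\<^sub>m n - rRS_lax n \<gamma> p) * vdm_matrix n \<gamma>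
      = z \<cdot>\<^sub>m vdm_matrix n \<gamma> - mat n n (\<lambda>(i,k). p i * \<gamma> i ^ k)"
    by (simp add: minus_mult_distrib_mat[OF _ T V] mult_smult_assoc_mat[OF one_carrier_mat V]
        left_mult_one_mat[OF V] rRS_lax_mult_vdm_matrix[OF assms] V)
  also have "\<dots> = wr_matrix n \<gamma> p z"
    by (rule eq_matI) (auto simp: wr_matrix_def vdm_matrix_def)
  finally show ?thesis by simp
qed

lemma wr_ratio_eq_rRS_charpoly:
  assumes "inj_on \<gamma> {0..<n}"
  shows "wr_ratio n \<gamma> p z = rRS_charpoly n \<gamma> p z"
proof -
  have "det (wr_matrix n \<gamma> p z) = rRS_charpoly n \<gamma> p z * det (vdm_matrix n \<gamma>)"
    unfolding wr_matrix_factorization[OF assms] rRS_charpoly_def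
    by (rule det_mult[where n = n]) (auto simp: rRS_lax_def vdm_matrix_def)
  moreover have "det (vdm_matrix n \<gamma>) \<noteq> 0"
    using det_vandermonde_nonzero[of "\<lambda>i. 1 + \<gamma> i" n] assms
    by (simp add: vdm_matrix_def inj_on_def)
  ultimately show ?thesis by (simp add: wr_ratio_def)
qed

theorem mainTheorem6:
  fixes r :: nat and \<gamma> p a :: "nat \<Rightarrow> complex"
  assumes "r \<ge> 1"
    and "inj_on \<gamma> {0..<r+1}"
  shows "(\<forall>z. wr_ratio (r+1) \<gamma> p z = rRS_charpoly (r+1) \<gamma> p z)
    \<and> ((\<forall>z. wr_ratio (r+1) \<gamma> p z = (\<Prod>i<r+1. z - a i))
        \<longleftrightarrow> (\<forall>z. rRS_charpoly (r+1) \<gamma> p z = (\<Prod>i<r+1. z - a i)))"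
  using wr_ratio_eq_rRS_charpoly[OF assms(2)] by simp

end
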